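(* Assume $J$ is nondecreasing on $\Theta$. Define $\Phi(\theta_0)=\int_{\theta_0}^{\bar\theta}J(\theta)F(\theta)\,dF(\theta)+v(\theta_0)(1-F(\theta_0))$ for $\theta_0\in[0,\bar\theta)$, and let $\theta_0^*\in\arg\max_{\theta_0\in[0,\bar\theta)}\Phi(\theta_0)$. Then the pair $(\theta_0^*,s^* )$ with $s^*(\theta)=F(\theta)$ for $\theta\in[\theta_0^*,\bar\theta]$ maximizes $$R(\theta_0,s)=\int_{\theta_0}^{\bar\theta}J(\theta)s(\theta)\,dF(\theta)+v(\theta_0)(1-F(\theta_0))$$ over all $\theta_0\in[0,\bar\theta)$ and $s\in\mathcal S(\theta_0)$; i.e., the revenue-maximizing mechanism excludes types below $\theta_0^*$ and fully separates types above $\theta_0^*$.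
   Context: Let $0<\bar\theta<\infty$, $\Theta=[0,\bar\theta]$, $F$ a cdf on $\Theta$ with continuous, strictly positive density $f$, $dF=f\,d\theta$, and $J(\theta)=\theta-\frac{1-F(\theta)}{f(\theta)}$. The intrinsic value $v:\Theta\to[0,\infty)$ is twice continuously differentiable with $v'\ge0$, $v''\le0$. For $\theta_0\in[0,\bar\theta)$ and bounded measurable $a,b:[\theta_0,\bar\theta]\to\mathbb R$, write $b\in\mathrm{MPS}(a)$ on $[\theta_0,\bar\theta]$ if $\int_x^{\bar\theta}b\,dF\le\int_x^{\bar\theta}a\,dF$ for all $x\in[\theta_0,\bar\theta]$, with equality at $x=\theta_0$. Let $\mathcal S(\theta_0)$ be the set of nondecreasing $s:[\theta_0,\bar\theta]\to[0,1]$ with $s\in\mathrm{MPS}(F)$ on $[\theta_0,\bar\theta]$ (the feasible interim statuses of participants when types below $\theta_0$ are excluded). $R(\theta_0,s)$ is the seller's expected revenue of the optimal-price incentive-compatible, individually rational mechanism with participation cutoff $\theta_0$ and interim status $s$. *)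

theory Defs
  imports "HOL-Analysis.Analysis"
begin

definition virtual_value :: "(real \<Rightarrow> real) \<Rightarrow> (real \<Rightarrow> real) \<Rightarrow> real \<Rightarrow> real" where
  "virtual_value F f \<theta> = \<theta> - (1 - F \<theta>) / f \<theta>"

text \<open>b in MPS(a) on [theta0, thetabar], integrals taken w.r.t. dF = f dtheta.\<close>
definition mps :: "(real \<Rightarrow> real) \<Rightarrow> real \<Rightarrow> real \<Rightarrow> (real \<Rightarrow> real) \<Rightarrow> (real \<Rightarrow> real) \<Rightarrow> bool" where
  "mps f \<theta>0 \<theta>bar b a \<longleftrightarrow>
     (\<forall>x\<in>{\<theta>0..\<theta>bar}. integral {x..\<theta>bar} (\<lambda>t. b t * f t) \<le> integral {x..\<theta>bar} (\<lambda>t. a t * f t))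
     \<and> integral {\<theta>0..\<theta>bar} (\<lambda>t. b t * f t) = integral {\<theta>0..\<theta>bar} (\<lambda>t. a t * f t)"

definition feasible_status :: "(real \<Rightarrow> real) \<Rightarrow> (real \<Rightarrow> real) \<Rightarrow> real \<Rightarrow> real \<Rightarrow> (real \<Rightarrow> real) set" where
  "feasible_status F f \<theta>bar \<theta>0 =
     {s. mono_on {\<theta>0..\<theta>bar} s \<and> (\<forall>t\<in>{\<theta>0..\<theta>bar}. 0 \<le> s t \<and> s t \<le> 1) \<and> mps f \<theta>0 \<theta>bar s F}"

definition revenue :: "(real \<Rightarrow> real) \<Rightarrow> (real \<Rightarrow> real) \<Rightarrow> (real \<Rightarrow> real) \<Rightarrow> real \<Rightarrow> real \<Rightarrow> (real \<Rightarrow> real) \<Rightarrow> real" where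
  "revenue F f v \<theta>bar \<theta>0 s =
     integral {\<theta>0..\<theta>bar} (\<lambda>t. virtual_value F f t * s t * f t) + v \<theta>0 * (1 - F \<theta>0)"

end

theory Submission
  imports Defs
begin

text \<open>
  For \<open>s \<in> MPS(F)\<close> the weight \<open>g = (F - s) f\<close> has nonnegative tail
  integrals and total integral zero. By the second mean value theorem (Bonnet), for the
  nondecreasing \<open>J\<close> there is a \<open>c\<close> with
  \<open>\<integral> J g = J(\<theta>\<^sub>0) \<integral>\<^sub>\<theta>\<^sub>0\<^sup>c g + J(\<theta>bar) \<integral>\<^sub>c\<^sup>\<theta>bar g = (J(\<theta>bar) - J(\<theta>\<^sub>0)) \<integral>\<^sub>c\<^sup>\<theta>bar g \<ge> 0\<close>,
  so full separation \<open>s = F\<close> is optimal for every cutoff, and what remains is to choose the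
  cutoff maximising \<open>\<Phi>\<close>.
\<close>

lemma integrable_mono_on_mult:
  fixes f g :: "real \<Rightarrow> real"
  assumes "f integrable_on {a..b}" "a \<le> b" "mono_on {a..b} g"
  shows "(\<lambda>x. g x * f x) integrable_on {a..b}"
proof -
  have "g x \<le> g y" if "a \<le> x" "x \<le> y" "y \<le> b" for x y
    using assms(3) that by (auto intro: mono_onD)
  then show ?thesis
    using second_mean_value_theorem_full[OF assms(1,2), of g] by blast
qed

lemma integral_mono_on_mult_nonneg:
  fixes J g :: "real \<Rightarrow> real"
  assumes ab: "a \<le> b" and g: "g integrable_on {a..b}" and J: "mono_on {a..b} J"
    and total: "integral {a..b} g = 0"
    and tails: "\<And>c. c \<in> {a..b} \<Longrightarrow> 0 \<le> integral {c..b} g"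
  shows "0 \<le> integral {a..b} (\<lambda>x. J x * g x)"
proof -
  have "J x \<le> J y" if "a \<le> x" "x \<le> y" "y \<le> b" for x y
    using J that by (auto intro: mono_onD)
  then obtain c where c: "c \<in> {a..b}"
    and bonnet: "integral {a..b} (\<lambda>x. J x * g x) = J a * integral {a..c} g + J b * integral {c..b} g"
    using second_mean_value_theorem[OF g ab, of J] by blast
  have "integral {a..c} g = - integral {c..b} g"
    using Henstock_Kurzweil_Integration.integral_combine[OF _ _ g, of c] c total by auto
  then have "integral {a..b} (\<lambda>x. J x * g x) = (J b - J a) * integral {c..b} g"
    by (simp add: bonnet algebra_simps)
  moreover have "J a \<le> J b"
    using J ab by (auto intro: mono_onD)
  ultimately show ?thesis
    using tails[OF c] by simp
qed

lemma mps_integral_mono_on_mult_le: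
  fixes J s F f :: "real \<Rightarrow> real"
  assumes ab: "a \<le> b" and f: "f integrable_on {a..b}"
    and J: "mono_on {a..b} J" and s: "mono_on {a..b} s" and F: "mono_on {a..b} F"
    and mps: "mps f a b s F"
  shows "integral {a..b} (\<lambda>t. J t * s t * f t) \<le> integral {a..b} (\<lambda>t. J t * F t * f t)"
proof -
  define g where "g x = F x * f x - s x * f x" for x
  have sf: "(\<lambda>x. s x * f x) integrable_on {c..b}" if "c \<in> {a..b}" for c
    using integrable_mono_on_mult[OF f ab s] that by (auto intro: integrable_on_subinterval)
  have Ff: "(\<lambda>x. F x * f x) integrable_on {c..b}" if "c \<in> {a..b}" for c
    using integrable_mono_on_mult[OF f ab F] that by (auto intro: integrable_on_subinterval)
  have tail: "integral {c..b} g = integral {c..b} (\<lambda>x. F x * f x) - integral {c..b} (\<lambda>x. s x * f x)"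
    if "c \<in> {a..b}" for c
    unfolding g_def using Ff[OF that] sf[OF that] by (rule integral_diff)
  have "0 \<le> integral {a..b} (\<lambda>x. J x * g x)"
  proof (rule integral_mono_on_mult_nonneg[OF ab _ J])
    show "g integrable_on {a..b}"
      unfolding g_def using sf Ff ab by (auto intro: integrable_diff)
    show "integral {a..b} g = 0"
      using tail[of a] mps ab unfolding mps_def by simp
    show "0 \<le> integral {c..b} g" if "c \<in> {a..b}" for c
      using tail[OF that] mps that unfolding mps_def by simp
  qed
  also have "\<dots> = integral {a..b} (\<lambda>x. J x * (F x * f x)) - integral {a..b} (\<lambda>x. J x * (s x * f x))"
    unfolding g_def right_diff_distrib
    using integrable_mono_on_mult[OF sf[of a] ab J] integrable_mono_on_mult[OF Ff[of a] ab J] ab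
    by (intro integral_diff) auto
  finally show ?thesis
    by (simp add: mult.assoc)
qed

lemma mono_on_integral_upto:
  fixes f :: "real \<Rightarrow> real"
  assumes f: "continuous_on {a..b} f" and f_nonneg: "\<forall>t\<in>{a..b}. 0 \<le> f t"
  shows "mono_on {a..b} (\<lambda>t. integral {a..t} f)"
proof (rule mono_onI)
  fix x y assume xy: "x \<in> {a..b}" "y \<in> {a..b}" "x \<le> y"
  have fi: "f integrable_on {a..y}"
    using xy by (intro integrable_continuous_interval continuous_on_subset[OF f]) auto
  have "integral {a..x} f \<le> integral {a..x} f + integral {x..y} f"
    using xy f_nonneg by (auto intro!: integral_nonneg integrable_on_subinterval[OF fi])
  also have "\<dots> = integral {a..y} f"
    using Henstock_Kurzweil_Integration.integral_combine[OF _ _ fi, of x] xy by auto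
  finally show "integral {a..x} f \<le> integral {a..y} f" .
qed

lemma cdf_in_feasible_status:
  assumes F: "mono_on {0..\<theta>bar} F" and F0: "F 0 = 0" and F_top: "F \<theta>bar = 1"
    and \<theta>0: "\<theta>0 \<in> {0..\<theta>bar}"
  shows "F \<in> feasible_status F f \<theta>bar \<theta>0"
  unfolding feasible_status_def mps_def
proof (intro CollectI conjI ballI)
  show "mono_on {\<theta>0..\<theta>bar} F"
    using F \<theta>0 by (auto intro: mono_on_subset)
  fix t assume "t \<in> {\<theta>0..\<theta>bar}"
  then show "0 \<le> F t" "F t \<le> 1"
    using mono_onD[OF F, of 0 t] mono_onD[OF F, of t \<theta>bar] \<theta>0 F0 F_top by auto
qed auto

theorem proposition1:
  fixes \<theta>bar :: real and F f v v' v'' :: "real \<Rightarrow> real" and \<theta>0s :: real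
  assumes pos: "0 < \<theta>bar"
    and f_cont: "continuous_on {0..\<theta>bar} f"
    and f_pos: "\<forall>t\<in>{0..\<theta>bar}. 0 < f t"
    and F_def: "\<forall>t\<in>{0..\<theta>bar}. F t = integral {0..t} f"
    and F_top: "F \<theta>bar = 1"
    and v_nonneg: "\<forall>t\<in>{0..\<theta>bar}. 0 \<le> v t"
    and v_deriv: "\<forall>t\<in>{0..\<theta>bar}. (v has_real_derivative v' t) (at t within {0..\<theta>bar})"
    and v'_deriv: "\<forall>t\<in>{0..\<theta>bar}. (v' has_real_derivative v'' t) (at t within {0..\<theta>bar})"
    and v''_cont: "continuous_on {0..\<theta>bar} v''"
    and v'_nonneg: "\<forall>t\<in>{0..\<theta>bar}. 0 \<le> v' t"
    and v''_nonpos: "\<forall>t\<in>{0..\<theta>bar}. v'' t \<le> 0"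
    and J_mono: "mono_on {0..\<theta>bar} (virtual_value F f)"
    and opt_mem: "\<theta>0s \<in> {0..<\<theta>bar}"
    and opt_max: "\<forall>\<theta>0\<in>{0..<\<theta>bar}.
        integral {\<theta>0..\<theta>bar} (\<lambda>t. virtual_value F f t * F t * f t) + v \<theta>0 * (1 - F \<theta>0)
        \<le> integral {\<theta>0s..\<theta>bar} (\<lambda>t. virtual_value F f t * F t * f t) + v \<theta>0s * (1 - F \<theta>0s)"
  shows "F \<in> feasible_status F f \<theta>bar \<theta>0s \<and>
         (\<forall>\<theta>0\<in>{0..<\<theta>bar}. \<forall>s\<in>feasible_status F f \<theta>bar \<theta>0.
            revenue F f v \<theta>bar \<theta>0 s \<le> revenue F f v \<theta>bar \<theta>0s F)"
proof (intro conjI ballI)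
  have F_mono: "mono_on {0..\<theta>bar} F"
    using mono_on_integral_upto[OF f_cont] f_pos F_def
    by (simp add: less_imp_le mono_on_def)
  have F0: "F 0 = 0"
    using F_def pos by simp
  show "F \<in> feasible_status F f \<theta>bar \<theta>0s"
    using cdf_in_feasible_status[OF F_mono F0 F_top] opt_mem by simp
  fix \<theta>0 s assume \<theta>0: "\<theta>0 \<in> {0..<\<theta>bar}" and s: "s \<in> feasible_status F f \<theta>bar \<theta>0"
  have sub: "{\<theta>0..\<theta>bar} \<subseteq> {0..\<theta>bar}"
    using \<theta>0 by auto
  have "integral {\<theta>0..\<theta>bar} (\<lambda>t. virtual_value F f t * s t * f t)
        \<le> integral {\<theta>0..\<theta>bar} (\<lambda>t. virtual_value F f t * F t * f t)"
    using s \<theta>0 unfolding feasible_status_def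
    by (intro mps_integral_mono_on_mult_le mono_on_subset[OF J_mono sub] mono_on_subset[OF F_mono sub]
          integrable_continuous_interval continuous_on_subset[OF f_cont sub]) auto
  then show "revenue F f v \<theta>bar \<theta>0 s \<le> revenue F f v \<theta>bar \<theta>0s F"
    using opt_max \<theta>0 unfolding revenue_def by fastforce
qed

end
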